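(* Let $\mathcal M$ be a countable transitive model of $\mathsf{ZFC}'$ and let $\mathbb P\in\mathcal M$ be a forcing by Silver trees. Then there exists a countable forcing by Silver trees $\mathbb Q$ such that $\mathbb P\sqsubset_{\mathcal M}\mathbb Q$.
   Context: $\mathsf{ZFC}'$ is ZFC without the Power Set axiom, plus the axiom asserting that $\mathcal P(\omega)$ exists. $2^{<\omega}$ is the set of finite binary strings. A set $T\subseteq 2^{<\omega}$ is a Silver tree if there are strings $u_0,u_1,\dots$ such that $T$ consists exactly of all strings $u_0{}^\frown i_0{}^\frown\cdots{}^\frown u_m{}^\frown i_m$ ($m<\omega$, $i_k\in\{0,1\}$) and all their initial segments; $[T]\subseteq 2^\omega$ is the set of branches; $T\restriction u=\{t\in T:u\subseteq t\text{ or }t\subseteq u\}$. Actions of strings $\sigma$ on reals ($(\sigma\cdot x)(k)=x(k)+\sigma(k)\bmod2$ for $k<|\sigma|$, else $x(k)$) and on strings ($(\sigma\cdot t)(j)=t(j)+\sigma(j)\bmod 2$ for $j<\min(|\sigma|,|t|)$, else $t(j)$); $\sigma\cdot T=\{\sigma\cdot t:t\in T\}$. A forcing by Silver trees is a set of Silver trees closed under $T\mapsto T\restriction u$ ($u\in T$) and $T\mapsto\sigma\cdot T$, ordered by inclusion. For continuous $f:2^\omega\to2^\omega$, its code is $\langle K_{k,i}:k<\omega,i=0,1\rangle$ where $K_{k,i}$ is the set of $\subseteq$-minimal strings $s$ with $f(x)(k)=i$ for all $x\supset s$. $f$ is regular on $T_0\in\mathbb P$ inside $\mathbb P$ if there are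 no $T'\in\mathbb P$, $T'\subseteq T_0$, and $\sigma$ with $f(x)=\sigma\cdot x$ for all $x\in[T']$. $\mathbb P\sqsubset_{\mathcal M}\mathbb Q$ means: (A) $\mathbb Q$ is dense in $\mathbb Q\cup\mathbb P$; (B) if $D\in\mathcal M$, $D\subseteq\mathbb P$ is pre-dense in $\mathbb P$ and $U\in\mathbb Q$, then $U\subseteq\bigcup D'$ for some finite $D'\subseteq D$; (C) if $T_0\in\mathbb P$, $f$ is continuous with code in $\mathcal M$ and regular on $T_0$ inside $\mathbb P$, and $U,V\in\mathbb Q$, $U\subseteq T_0$, then $[V]\cap f[[U]]=\emptyset$. *)

theory Defs
  imports Main "HOL-Library.Countable_Set" "HOL-Library.Sublist"
begin

text \<open>Strings in 2^{<omega} are bool lists; reals in 2^omega are functions nat => bool.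
  Addition mod 2 is exclusive or, written as inequality on bool.\<close>

definition init :: "(nat \<Rightarrow> bool) \<Rightarrow> nat \<Rightarrow> bool list" where
  "init x n = map x [0..<n]"

definition silver_string :: "(nat \<Rightarrow> bool list) \<Rightarrow> (nat \<Rightarrow> bool) \<Rightarrow> nat \<Rightarrow> bool list" where
  "silver_string u i m = concat (map (\<lambda>k. u k @ [i k]) [0..<Suc m])"

definition silver_tree :: "bool list set \<Rightarrow> bool" where
  "silver_tree T \<longleftrightarrow> (\<exists>u :: nat \<Rightarrow> bool list.
      T = {t. \<exists>m i. prefix t (silver_string u i m)})"

definition branches :: "bool list set \<Rightarrow> (nat \<Rightarrow> bool) set" where
  "branches T = {x. \<forall>n. init x n \<in> T}"

definition restr :: "bool list set \<Rightarrow> bool list \<Rightarrow> bool list set" where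
  "restr T u = {t \<in> T. prefix u t \<or> prefix t u}"

definition act_real :: "bool list \<Rightarrow> (nat \<Rightarrow> bool) \<Rightarrow> (nat \<Rightarrow> bool)" where
  "act_real \<sigma> x = (\<lambda>k. if k < length \<sigma> then x k \<noteq> \<sigma> ! k else x k)"

definition act_str :: "bool list \<Rightarrow> bool list \<Rightarrow> bool list" where
  "act_str \<sigma> t = map (\<lambda>j. if j < length \<sigma> then t ! j \<noteq> \<sigma> ! j else t ! j) [0..<length t]"

definition act_tree :: "bool list \<Rightarrow> bool list set \<Rightarrow> bool list set" where
  "act_tree \<sigma> T = act_str \<sigma> ` T"

definition silver_forcing :: "bool list set set \<Rightarrow> bool" where
  "silver_forcing P \<longleftrightarrow> (\<forall>T\<in>P. silver_tree T) \<and>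
     (\<forall>T\<in>P. \<forall>u\<in>T. restr T u \<in> P) \<and>
     (\<forall>T\<in>P. \<forall>\<sigma>. act_tree \<sigma> T \<in> P)"

definition cantor_continuous :: "((nat \<Rightarrow> bool) \<Rightarrow> (nat \<Rightarrow> bool)) \<Rightarrow> bool" where
  "cantor_continuous f \<longleftrightarrow> (\<forall>x k. \<exists>n. \<forall>y. init y n = init x n \<longrightarrow> f y k = f x k)"

definition regular_on :: "((nat \<Rightarrow> bool) \<Rightarrow> (nat \<Rightarrow> bool)) \<Rightarrow> bool list set \<Rightarrow> bool list set set \<Rightarrow> bool" where
  "regular_on f T0 P \<longleftrightarrow>
     \<not> (\<exists>T'\<in>P. T' \<subseteq> T0 \<and> (\<exists>\<sigma>. \<forall>x\<in>branches T'. f x = act_real \<sigma> x))"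

definition predense :: "bool list set set \<Rightarrow> bool list set set \<Rightarrow> bool" where
  "predense D P \<longleftrightarrow> (\<forall>T\<in>P. \<exists>S\<in>D. \<exists>R\<in>P. R \<subseteq> T \<and> R \<subseteq> S)"

text \<open>The relation P \<sqsubset>_M Q, where the countable transitive model M is represented
  only through the countable family Dfam of sets (of trees) belonging to M and the
  countable family Ffam of continuous functions whose codes belong to M.\<close>
definition sqsub ::
  "bool list set set set \<Rightarrow> ((nat \<Rightarrow> bool) \<Rightarrow> (nat \<Rightarrow> bool)) set \<Rightarrow>
   bool list set set \<Rightarrow> bool list set set \<Rightarrow> bool" where
  "sqsub Dfam Ffam P Q \<longleftrightarrow>
     (\<forall>T\<in>Q \<union> P. \<exists>U\<in>Q. U \<subseteq> T) \<and>
     (\<forall>D\<in>Dfam. D \<subseteq> P \<longrightarrow> predense D P \<longrightarrow>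
         (\<forall>U\<in>Q. \<exists>D'. finite D' \<and> D' \<subseteq> D \<and> U \<subseteq> \<Union>D')) \<and>
     (\<forall>T0\<in>P. \<forall>f\<in>Ffam. cantor_continuous f \<longrightarrow> regular_on f T0 P \<longrightarrow>
         (\<forall>U\<in>Q. \<forall>V\<in>Q. U \<subseteq> T0 \<longrightarrow> branches V \<inter> f ` branches U = {}))"

end

theory Submission
  imports Defs
begin

text \<open>Enumerate the conditions of P as T 0, T 1, ... and shrink every T i along a fusion
  sequence of stage trees. At stage n the first free coordinate of every stage tree becomes a
  splitting coordinate, and every translate of a stage tree by one of the first n strings
  composed with a flip at splitting coordinates is refined: into a member of each of the first n
  predense sets, and so that each of the first n continuous functions maps it away from every
  other such translate. The latter is possible by continuity for different trees, and by
  regularity for two translates of the same tree. The fusion limit U i is a Silver tree below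
  T i whose branches pass, at every stage, through one of finitely many refined translates; the
  translates of restrictions of the trees U i form the required countable forcing Q.\<close>

section \<open>Strings, translations and restrictions\<close>

lemma prefix_iff_nth: "prefix a b \<longleftrightarrow> length a \<le> length b \<and> (\<forall>j<length a. a!j = b!j)"
proof
  assume "prefix a b" then show "length a \<le> length b \<and> (\<forall>j<length a. a!j = b!j)"
    by (auto simp: prefix_def nth_append)
next
  assume "length a \<le> length b \<and> (\<forall>j<length a. a!j = b!j)"
  then have "take (length a) b = a" by (auto intro: nth_equalityI)
  then show "prefix a b" by (metis take_is_prefix)
qed

lemma length_init [simp]: "length (init x n) = n"
  by (simp add: init_def)

lemma nth_init [simp]: "j < n \<Longrightarrow> init x n ! j = x j"
  by (simp add: init_def)

lemma init_eq_iff: "init a m = init b m \<longleftrightarrow> (\<forall>j<m. a j = b j)"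
  by (auto simp: init_def)

text \<open>Reading a string as an infinite sequence padded with zeros makes translations compose.\<close>

definition bit_of :: "bool list \<Rightarrow> nat \<Rightarrow> bool" where
  "bit_of s j \<longleftrightarrow> j < length s \<and> s!j"

lemma act_real_eq_bit_of: "act_real \<sigma> x = (\<lambda>k. x k \<noteq> bit_of \<sigma> k)"
  by (auto simp: act_real_def bit_of_def)

lemma length_act_str [simp]: "length (act_str \<sigma> t) = length t"
  by (simp add: act_str_def)

lemma nth_act_str [simp]: "j < length t \<Longrightarrow> act_str \<sigma> t ! j = (t!j \<noteq> bit_of \<sigma> j)"
  by (simp add: act_str_def bit_of_def)

lemma act_str_cong_bit_of: "(\<And>j. bit_of a j = bit_of b j) \<Longrightarrow> act_str a = act_str b"
  by (rule ext, rule nth_equalityI) simp_all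

lemma act_str_invol [simp]: "act_str \<sigma> (act_str \<sigma> t) = t"
  by (auto intro: nth_equalityI)

lemma act_real_invol [simp]: "act_real \<sigma> (act_real \<sigma> x) = x"
  by (auto simp: act_real_eq_bit_of)

lemma init_act_real: "init (act_real \<sigma> x) n = act_str \<sigma> (init x n)"
  by (auto intro: nth_equalityI simp: act_real_eq_bit_of)

lemma prefix_act_str_iff: "prefix (act_str \<sigma> a) (act_str \<sigma> b) \<longleftrightarrow> prefix a b"
  unfolding prefix_iff_nth length_act_str by (metis nth_act_str order_less_le_trans)

lemma mem_act_tree: "t \<in> act_tree \<sigma> T \<longleftrightarrow> act_str \<sigma> t \<in> T"
  by (auto simp: act_tree_def) (metis act_str_invol image_eqI)

lemma act_tree_invol [simp]: "act_tree \<sigma> (act_tree \<sigma> T) = T"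
  by (auto simp: act_tree_def image_image)

lemma act_tree_mono: "T \<subseteq> T' \<Longrightarrow> act_tree \<sigma> T \<subseteq> act_tree \<sigma> T'"
  by (auto simp: act_tree_def)

lemma act_tree_cong_bit_of: "(\<And>j. bit_of a j = bit_of b j) \<Longrightarrow> act_tree a T = act_tree b T"
  unfolding act_tree_def by (drule act_str_cong_bit_of) simp

lemma act_tree_Nil: "act_tree [] T = T"
proof -
  have "act_str [] t = t" for t by (rule nth_equalityI) (simp_all add: bit_of_def)
  then show ?thesis by (simp add: act_tree_def)
qed

lemma branches_mono: "T \<subseteq> T' \<Longrightarrow> branches T \<subseteq> branches T'"
  by (auto simp: branches_def)

lemma branches_act_tree: "branches (act_tree \<sigma> T) = act_real \<sigma> ` branches T"
proof -
  have "x \<in> branches (act_tree \<sigma> T) \<longleftrightarrow> act_real \<sigma> x \<in> branches T" for x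
    by (simp add: branches_def mem_act_tree init_act_real)
  then show ?thesis
    by (metis (no_types, lifting) act_real_invol image_iff subsetI subset_antisym)
qed

definition xor_str :: "bool list \<Rightarrow> bool list \<Rightarrow> bool list" where
  "xor_str a b = map (\<lambda>j. bit_of a j \<noteq> bit_of b j) [0..<max (length a) (length b)]"

lemma bit_of_xor_str: "bit_of (xor_str a b) j = (bit_of a j \<noteq> bit_of b j)"
  by (auto simp: xor_str_def bit_of_def)

lemma act_tree_act_tree: "act_tree a (act_tree b T) = act_tree (xor_str a b) T"
proof -
  have "act_str a (act_str b t) = act_str (xor_str a b) t" for t
    by (auto intro: nth_equalityI simp: bit_of_xor_str)
  then show ?thesis by (simp add: act_tree_def image_image)
qed

definition flip_str :: "nat set \<Rightarrow> bool list" where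
  "flip_str A = map (\<lambda>j. j \<in> A) [0..<Suc (Max (insert 0 A))]"

lemma bit_of_flip_str: "finite A \<Longrightarrow> bit_of (flip_str A) j \<longleftrightarrow> j \<in> A"
proof -
  assume "finite A"
  then have "j \<in> A \<Longrightarrow> j < Suc (Max (insert 0 A))" by (simp add: le_imp_less_Suc)
  then show ?thesis unfolding flip_str_def bit_of_def by (auto simp del: upt_Suc)
qed

lemma act_tree_flip_str_empty: "act_tree (flip_str {}) T = T"
proof -
  have "act_str (flip_str {}) t = t" for t by (rule nth_equalityI) (simp_all add: bit_of_flip_str)
  then show ?thesis by (simp add: act_tree_def)
qed

lemma act_tree_flip_str_insert:
  assumes "finite A" "p \<notin> A"
  shows "act_tree (flip_str (insert p A)) T = act_tree (flip_str A) (act_tree (flip_str {p}) T)"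
  unfolding act_tree_act_tree
  by (rule act_tree_cong_bit_of) (use assms in \<open>auto simp: bit_of_xor_str bit_of_flip_str\<close>)

lemma restr_subset: "restr T s \<subseteq> T"
  by (auto simp: restr_def)

lemma init_branch_restr: "x \<in> branches (restr T s) \<Longrightarrow> init x (length s) = s"
proof -
  assume "x \<in> branches (restr T s)"
  then have "prefix s (init x (length s)) \<or> prefix (init x (length s)) s"
    by (simp add: branches_def restr_def)
  then show ?thesis by (metis length_init prefix_length_le prefix_order.antisym prefix_length_prefix prefix_order.refl)
qed

lemma restr_Nil: "restr T [] = T"
  by (auto simp: restr_def)

lemma restr_act_tree: "restr (act_tree \<sigma> X) u = act_tree \<sigma> (restr X (act_str \<sigma> u))"
proof (rule set_eqI)
  fix t
  have "t \<in> restr (act_tree \<sigma> X) u \<longleftrightarrow> act_str \<sigma> t \<in> X \<and> (prefix u t \<or> prefix t u)"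
    by (simp add: restr_def mem_act_tree)
  also have "\<dots> \<longleftrightarrow> act_str \<sigma> t \<in> X \<and>
      (prefix (act_str \<sigma> u) (act_str \<sigma> t) \<or> prefix (act_str \<sigma> t) (act_str \<sigma> u))"
    by (simp add: prefix_act_str_iff)
  also have "\<dots> \<longleftrightarrow> t \<in> act_tree \<sigma> (restr X (act_str \<sigma> u))"
    by (simp add: restr_def mem_act_tree)
  finally show "t \<in> restr (act_tree \<sigma> X) u \<longleftrightarrow> t \<in> act_tree \<sigma> (restr X (act_str \<sigma> u))" .
qed

lemma restr_restr_of_prefix: "prefix s v \<Longrightarrow> restr (restr Y s) v = restr Y v"
  unfolding restr_def using prefix_same_cases prefix_order.trans by blast

lemma restr_restr_of_prefix': "prefix v s \<Longrightarrow> restr (restr Y s) v = restr Y s"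
  unfolding restr_def using prefix_same_cases prefix_order.trans by blast

section \<open>Silver trees as cubes\<close>

text \<open>A Silver tree is the set of strings that agree with a base point outside an infinite
  set of free coordinates; the strings u k of the definition are the frozen blocks between
  consecutive free coordinates.\<close>

definition cube :: "(nat \<Rightarrow> bool) \<Rightarrow> nat set \<Rightarrow> bool list set" where
  "cube z K = {t. \<forall>j<length t. j \<notin> K \<longrightarrow> t!j = z j}"

lemma mem_cube: "t \<in> cube z K \<longleftrightarrow> (\<forall>j<length t. j \<notin> K \<longrightarrow> t!j = z j)"
  by (simp add: cube_def)

lemma init_mem_cube: "init x n \<in> cube z K \<longleftrightarrow> (\<forall>j<n. j \<notin> K \<longrightarrow> x j = z j)"
  by (simp add: cube_def)

lemma cube_cong: "(\<And>j. j \<notin> K \<Longrightarrow> z j = z' j) \<Longrightarrow> cube z K = cube z' K"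
  by (auto simp: cube_def)

lemma silver_string_Suc: "silver_string u i (Suc m) = silver_string u i m @ (u (Suc m) @ [i (Suc m)])"
  by (simp add: silver_string_def)

lemma silver_string_0: "silver_string u i 0 = u 0 @ [i 0]"
  by (simp add: silver_string_def)

lemma not_in_range_below_strict_mono:
  assumes "strict_mono (e :: nat \<Rightarrow> nat)" "j < e 0" shows "j \<notin> range e"
proof
  assume "j \<in> range e"
  then obtain k where "j = e k" by auto
  then show False using assms strict_mono_less_eq[OF assms(1), of 0 k] by simp
qed

lemma not_in_range_between_strict_mono:
  assumes "strict_mono (e :: nat \<Rightarrow> nat)" "e m < j" "j < e (Suc m)" shows "j \<notin> range e"
proof
  assume "j \<in> range e"
  then obtain k where "j = e k" by auto
  then show False using assms strict_mono_less[OF assms(1), of m k] strict_mono_less[OF assms(1), of k "Suc m"]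
    by simp
qed

lemma silver_string_formula:
  assumes e: "strict_mono e" and u0: "u 0 = map z [0..<e 0]"
    and uSuc: "\<And>k. u (Suc k) = map z [Suc (e k)..<e (Suc k)]"
  shows "silver_string u i m = map (\<lambda>j. if j \<in> range e then i (inv e j) else z j) [0..<Suc (e m)]"
proof (induction m)
  let ?h = "\<lambda>j. if j \<in> range e then i (inv e j) else z j"
  case 0
  have "map ?h [0..<Suc (e 0)] = map ?h [0..<e 0] @ [i (inv e (e 0))]"
    by simp
  also have "map ?h [0..<e 0] = map z [0..<e 0]"
    by (rule map_cong) (simp_all add: not_in_range_below_strict_mono[OF e])
  also have "inv e (e 0) = 0" using strict_mono_imp_inj_on[OF e] by (simp add: inv_f_f)
  finally show ?case by (simp add: silver_string_0 u0)
next
  let ?h = "\<lambda>j. if j \<in> range e then i (inv e j) else z j"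
  case (Suc m)
  have "e m < e (Suc m)" using e by (simp add: strict_mono_def)
  then have "[0..<e (Suc m)] = [0..<Suc (e m)] @ [Suc (e m)..<e (Suc m)]"
    using upt_add_eq_append[of 0 "Suc (e m)" "e (Suc m) - Suc (e m)"] by simp
  then have "map ?h [0..<Suc (e (Suc m))] =
      map ?h [0..<Suc (e m)] @ map ?h [Suc (e m)..<e (Suc m)] @ [?h (e (Suc m))]"
    by simp
  also have "map ?h [Suc (e m)..<e (Suc m)] = u (Suc m)"
    unfolding uSuc by (rule map_cong) (simp_all add: not_in_range_between_strict_mono[OF e, of m])
  also have "?h (e (Suc m)) = i (Suc m)" using strict_mono_imp_inj_on[OF e] by (simp add: inv_f_f)
  finally show ?case using Suc by (simp add: silver_string_Suc)
qed

lemma silver_strings_eq_cube: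
  assumes e: "strict_mono e" and u0: "u 0 = map z [0..<e 0]"
    and uSuc: "\<And>k. u (Suc k) = map z [Suc (e k)..<e (Suc k)]"
  shows "{t. \<exists>m i. prefix t (silver_string u i m)} = cube z (range e)"
proof (intro set_eqI iffI; simp only: mem_Collect_eq)
  note formula = silver_string_formula[OF e u0 uSuc]
  fix t
  assume "\<exists>m i. prefix t (silver_string u i m)"
  then obtain m i where p: "prefix t (silver_string u i m)" by auto
  have len: "length t \<le> Suc (e m)" using prefix_length_le[OF p] by (simp add: formula)
  show "t \<in> cube z (range e)"
    unfolding mem_cube
  proof (intro allI impI)
    fix j assume j: "j < length t" "j \<notin> range e"
    have "t ! j = silver_string u i m ! j" using p j(1) by (simp add: prefix_iff_nth)
    also have "\<dots> = z j" using j len by (simp add: formula del: upt_Suc)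
    finally show "t ! j = z j" .
  qed
next
  note formula = silver_string_formula[OF e u0 uSuc]
  fix t
  assume t: "t \<in> cube z (range e)"
  define i where "i = (\<lambda>k. e k < length t \<and> t ! (e k))"
  have em: "length t \<le> e (length t)" using e by (simp add: strict_mono_imp_increasing)
  have "prefix t (silver_string u i (length t))"
    unfolding formula prefix_iff_nth
  proof (intro conjI allI impI)
    show "length t \<le> length (map (\<lambda>j. if j \<in> range e then i (inv e j) else z j) [0..<Suc (e (length t))])"
      using em by simp
    fix j assume j: "j < length t"
    then have jl: "j < Suc (e (length t))" using em by simp
    show "t ! j = map (\<lambda>j. if j \<in> range e then i (inv e j) else z j) [0..<Suc (e (length t))] ! j"
    proof (cases "j \<in> range e")
      case True
      then obtain k where k: "j = e k" by auto
      have "inv e j = k" using k strict_mono_imp_inj_on[OF e] by (simp add: inv_f_f)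
      then show ?thesis using True jl j k i_def by (simp del: upt_Suc)
    next
      case False
      then show ?thesis using t j jl by (simp del: upt_Suc add: mem_cube)
    qed
  qed
  then show "\<exists>m i. prefix t (silver_string u i m)" by blast
qed

lemma silver_tree_cube:
  assumes "infinite K" shows "silver_tree (cube z K)"
proof -
  define e where "e = enumerate K"
  have e: "strict_mono e" "range e = K"
    using strict_mono_enumerate range_enumerate assms e_def by auto
  define u where "u = (\<lambda>k. if k = 0 then map z [0..<e 0] else map z [Suc (e (k-1))..<e k])"
  have "{t. \<exists>m i. prefix t (silver_string u i m)} = cube z (range e)"
    by (rule silver_strings_eq_cube[OF e(1)]) (simp_all add: u_def)
  then have "cube z K = {t. \<exists>m i. prefix t (silver_string u i m)}" using e(2) by simp
  then show ?thesis unfolding silver_tree_def by blast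
qed

text \<open>Conversely, e k is the position of the k-th free coordinate, namely the bit
  appended after the block u k.\<close>

lemma silver_tree_imp_cube:
  assumes "silver_tree T" obtains z K where "infinite K" "T = cube z K"
proof -
  obtain u where T: "T = {t. \<exists>m i. prefix t (silver_string u i m)}"
    using assms silver_tree_def by auto
  define e where "e = rec_nat (length (u 0)) (\<lambda>k ek. ek + Suc (length (u (Suc k))))"
  have e0: "e 0 = length (u 0)" and eSuc: "e (Suc k) = e k + Suc (length (u (Suc k)))" for k
    by (simp_all add: e_def)
  have e: "strict_mono e" unfolding strict_mono_Suc_iff using eSuc by simp
  define L where "L = (\<lambda>j. LEAST k. j \<le> e k)"
  define z where "z = (\<lambda>j. if L j = 0 then u 0 ! j else u (L j) ! (j - Suc (e (L j - 1))))"
  have L0: "L j = 0" if "j \<le> e 0" for j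
    unfolding L_def using that by (intro Least_equality) auto
  have LSuc: "L j = Suc k" if "e k < j" "j \<le> e (Suc k)" for j k
    unfolding L_def
  proof (rule Least_equality)
    fix y assume "j \<le> e y"
    show "Suc k \<le> y"
    proof (rule ccontr)
      assume "\<not> Suc k \<le> y"
      then have "e y \<le> e k" using e by (simp add: strict_mono_less_eq)
      then show False using that \<open>j \<le> e y\<close> by simp
    qed
  qed (rule that(2))
  have u0: "u 0 = map z [0..<e 0]"
    by (rule nth_equalityI) (simp_all add: e0 z_def L0)
  have uSuc: "u (Suc k) = map z [Suc (e k)..<e (Suc k)]" for k
  proof (rule nth_equalityI)
    fix n assume n: "n < length (u (Suc k))"
    then have "L (Suc (e k) + n) = Suc k" by (intro LSuc) (auto simp: eSuc)
    have "map z [Suc (e k)..<e (Suc k)] ! n = z (Suc (e k) + n)"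
      using n by (intro nth_map_upt) (simp add: eSuc)
    also have "\<dots> = u (Suc k) ! n" using \<open>L (Suc (e k) + n) = Suc k\<close> by (simp add: z_def)
    finally show "u (Suc k) ! n = map z [Suc (e k)..<e (Suc k)] ! n" by simp
  qed (simp only: length_map length_upt eSuc)
  have "T = cube z (range e)" using silver_strings_eq_cube[OF e u0 uSuc] T by simp
  moreover have "infinite (range e)"
    using range_inj_infinite strict_mono_imp_inj_on[OF e] by blast
  ultimately show thesis using that by blast
qed

lemma branches_cube: "branches (cube z K) = {x. \<forall>j. j \<notin> K \<longrightarrow> x j = z j}"
proof (intro set_eqI iffI)
  fix x assume "x \<in> branches (cube z K)"
  then have "init x (Suc j) \<in> cube z K" for j by (simp add: branches_def)
  then show "x \<in> {x. \<forall>j. j \<notin> K \<longrightarrow> x j = z j}" unfolding init_mem_cube by blast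
qed (auto simp: branches_def init_mem_cube)

lemma cube_extends_to_branch: "t \<in> cube z K \<Longrightarrow> \<exists>x\<in>branches (cube z K). t = init x (length t)"
proof -
  assume t: "t \<in> cube z K"
  define x where "x = (\<lambda>j. if j < length t then t!j else z j)"
  have "x \<in> branches (cube z K)" unfolding branches_cube x_def using t by (auto simp: mem_cube)
  moreover have "t = init x (length t)" by (auto intro: nth_equalityI simp: x_def)
  ultimately show ?thesis by blast
qed

lemma act_tree_cube: "act_tree \<sigma> (cube z K) = cube (act_real \<sigma> z) K"
  by (auto simp: mem_act_tree cube_def act_real_eq_bit_of)

lemma restr_cube:
  assumes s: "s \<in> cube z K"
  shows "restr (cube z K) s = cube (\<lambda>j. if j < length s then s!j else z j) (K - {..<length s})"
proof (intro set_eqI iffI)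
  fix t assume "t \<in> restr (cube z K) s"
  then have t: "t \<in> cube z K" and c: "prefix s t \<or> prefix t s" by (auto simp: restr_def)
  show "t \<in> cube (\<lambda>j. if j < length s then s!j else z j) (K - {..<length s})"
    unfolding mem_cube
  proof (intro allI impI)
    fix j assume j: "j < length t" "j \<notin> K - {..<length s}"
    show "t ! j = (if j < length s then s ! j else z j)"
    proof (cases "j < length s")
      case True then show ?thesis using c j by (auto simp: prefix_iff_nth)
    next
      case False then show ?thesis using t j by (auto simp: mem_cube)
    qed
  qed
next
  fix t assume t: "t \<in> cube (\<lambda>j. if j < length s then s!j else z j) (K - {..<length s})"
  then have "t ! j = s ! j" if "j < length t" "j < length s" for j
    using that by (auto simp: mem_cube)
  then have "prefix s t \<or> prefix t s"
    by (cases "length s \<le> length t") (auto simp: prefix_iff_nth)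
  moreover have "t \<in> cube z K"
    unfolding mem_cube
  proof (intro allI impI)
    fix j assume j: "j < length t" "j \<notin> K"
    show "t ! j = z j"
    proof (cases "j < length s")
      case True then show ?thesis using \<open>\<And>j. j < length t \<Longrightarrow> j < length s \<Longrightarrow> t ! j = s ! j\<close> j s
        by (auto simp: mem_cube)
    next
      case False then show ?thesis using t j by (auto simp: mem_cube)
    qed
  qed
  ultimately show "t \<in> restr (cube z K) s" by (simp add: restr_def)
qed

definition free_coords :: "bool list set \<Rightarrow> nat set" where
  "free_coords T = {j. (\<exists>t\<in>T. j < length t \<and> t!j) \<and> (\<exists>t\<in>T. j < length t \<and> \<not> t!j)}"

definition base_point :: "bool list set \<Rightarrow> nat \<Rightarrow> bool" where
  "base_point T j \<longleftrightarrow> (\<exists>t\<in>T. j < length t \<and> t!j)"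

lemma free_coords_mono: "R' \<subseteq> R \<Longrightarrow> free_coords R' \<subseteq> free_coords R"
  unfolding free_coords_def by blast

lemma free_coords_cube: "free_coords (cube z K) = K"
proof (intro set_eqI iffI)
  fix j assume "j \<in> free_coords (cube z K)"
  then obtain t1 t2 where "t1 \<in> cube z K" "j < length t1" "t1!j" "t2 \<in> cube z K" "j < length t2" "\<not> t2!j"
    by (auto simp: free_coords_def)
  then show "j \<in> K" unfolding mem_cube by metis
next
  fix j assume j: "j \<in> K"
  let ?t = "\<lambda>b. init (z(j:=b)) (Suc j)"
  have "?t b \<in> cube z K" "j < length (?t b)" "?t b ! j = b" for b
    using j by (auto simp: init_mem_cube)
  then show "j \<in> free_coords (cube z K)"
    unfolding free_coords_def by (metis (no_types, lifting) mem_Collect_eq)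
qed

lemma base_point_cube: "j \<notin> K \<Longrightarrow> base_point (cube z K) j = z j"
proof -
  assume j: "j \<notin> K"
  have w: "init z (Suc j) \<in> cube z K" by (simp add: init_mem_cube)
  have fixed: "\<forall>t\<in>cube z K. j < length t \<longrightarrow> t!j = z j" using j by (auto simp: mem_cube)
  show ?thesis unfolding base_point_def
  proof
    assume "\<exists>t\<in>cube z K. j < length t \<and> t!j" then show "z j" using fixed by blast
  next
    assume "z j" then show "\<exists>t\<in>cube z K. j < length t \<and> t!j"
      using w by (intro bexI[of _ "init z (Suc j)"]) auto
  qed
qed

lemma silver_tree_canonical:
  assumes "silver_tree T"
  shows "T = cube (base_point T) (free_coords T)" "infinite (free_coords T)"
proof -
  obtain z K where K: "infinite K" "T = cube z K" using silver_tree_imp_cube[OF assms] .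
  have "cube z K = cube (base_point (cube z K)) (free_coords (cube z K))"
    unfolding free_coords_cube by (rule cube_cong) (simp add: base_point_cube)
  then show "T = cube (base_point T) (free_coords T)" unfolding K(2) .
  show "infinite (free_coords T)" using K free_coords_cube by simp
qed

lemma silver_tree_branch_ex: "silver_tree T \<Longrightarrow> \<exists>x. x \<in> branches T"
  by (erule silver_tree_imp_cube) (auto simp: branches_cube)

lemma silver_tree_subset_of_branches:
  assumes "silver_tree T" "branches T \<subseteq> branches T'" shows "T \<subseteq> T'"
proof
  fix t assume "t \<in> T"
  obtain z K where T: "T = cube z K" using silver_tree_imp_cube[OF assms(1)] by blast
  obtain x where x: "x \<in> branches T" "init x (length t) = t"
    using cube_extends_to_branch \<open>t \<in> T\<close> unfolding T by metis
  then have "init x (length t) \<in> T'" using assms(2) unfolding branches_def by blast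
  then show "t \<in> T'" unfolding x(2) .
qed

lemma silver_tree_restr:
  assumes "silver_tree T" "s \<in> T"
  shows "silver_tree (restr T s)" "free_coords (restr T s) = free_coords T - {..<length s}"
proof -
  obtain z K where K: "infinite K" "T = cube z K" using silver_tree_imp_cube[OF assms(1)] .
  have r: "restr T s = cube (\<lambda>j. if j < length s then s!j else z j) (K - {..<length s})"
    using restr_cube assms(2) unfolding K(2) .
  show "silver_tree (restr T s)" unfolding r using K(1) by (simp add: silver_tree_cube)
  show "free_coords (restr T s) = free_coords T - {..<length s}"
    unfolding r by (simp add: K(2) free_coords_cube)
qed

lemma silver_tree_act_tree: "silver_tree T \<Longrightarrow> silver_tree (act_tree \<sigma> T)"
  by (erule silver_tree_imp_cube) (simp add: act_tree_cube silver_tree_cube)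

lemma base_point_subtree:
  assumes "silver_tree R'" "silver_tree R" "R' \<subseteq> R" "j \<notin> free_coords R"
  shows "base_point R' j = base_point R j"
proof -
  have fixed: "\<forall>t\<in>R'. j < length t \<longrightarrow> t!j = base_point R j"
  proof (intro ballI impI)
    fix t assume "t \<in> R'" "j < length t"
    moreover have "t \<in> cube (base_point R) (free_coords R)"
      using \<open>t \<in> R'\<close> assms(3) silver_tree_canonical(1)[OF assms(2)] by blast
    ultimately show "t!j = base_point R j" using assms(4) by (simp add: mem_cube)
  qed
  obtain x where "x \<in> branches R'" using silver_tree_branch_ex assms(1) by blast
  then have w: "init x (Suc j) \<in> R'" by (simp add: branches_def)
  show ?thesis unfolding base_point_def[of R']
  proof
    assume "\<exists>t\<in>R'. j < length t \<and> t ! j" then show "base_point R j" using fixed by blast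
  next
    assume "base_point R j"
    then have "init x (Suc j) ! j" using fixed w by simp
    then show "\<exists>t\<in>R'. j < length t \<and> t ! j" using w by (intro bexI[of _ "init x (Suc j)"]) auto
  qed
qed

lemma act_tree_flip_free:
  assumes "silver_tree R" "p \<in> free_coords R"
  shows "act_tree (flip_str {p}) R = R"
proof -
  obtain z K where R: "R = cube z K" using silver_tree_imp_cube[OF assms(1)] by blast
  then have "p \<in> K" using assms(2) free_coords_cube by simp
  then show ?thesis unfolding R act_tree_cube
    by (intro cube_cong) (auto simp: act_real_eq_bit_of bit_of_flip_str)
qed

definition first_free :: "bool list set \<Rightarrow> nat" where
  "first_free R = (LEAST j. j \<in> free_coords R)"

lemma first_free_mem: "silver_tree R \<Longrightarrow> first_free R \<in> free_coords R"
proof -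
  assume "silver_tree R"
  then obtain j where "j \<in> free_coords R" using silver_tree_canonical(2) infinite_imp_nonempty by blast
  then show ?thesis unfolding first_free_def by (rule LeastI)
qed

lemma not_free_below_first_free: "j < first_free R \<Longrightarrow> j \<notin> free_coords R"
  unfolding first_free_def using not_less_Least by blast

lemma first_free_mono: "silver_tree R' \<Longrightarrow> R' \<subseteq> R \<Longrightarrow> first_free R \<le> first_free R'"
proof -
  assume "silver_tree R'" "R' \<subseteq> R"
  then have "first_free R' \<in> free_coords R" using first_free_mem free_coords_mono by blast
  then show ?thesis unfolding first_free_def[of R] by (rule Least_le)
qed

definition freeze_first :: "bool list set \<Rightarrow> bool list set" where
  "freeze_first R = restr R (init (base_point R) (Suc (first_free R)))"

lemma init_base_point_mem: "silver_tree R \<Longrightarrow> init (base_point R) n \<in> R"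
proof -
  assume "silver_tree R"
  then have R: "cube (base_point R) (free_coords R) = R" by (rule silver_tree_canonical(1)[symmetric])
  have "init (base_point R) n \<in> cube (base_point R) (free_coords R)" by (simp add: init_mem_cube)
  then show ?thesis unfolding R .
qed

lemma freeze_first_subset: "freeze_first R \<subseteq> R"
  by (simp add: freeze_first_def restr_subset)

lemma freeze_first_silver_tree: "silver_tree R \<Longrightarrow> silver_tree (freeze_first R)"
  unfolding freeze_first_def by (intro silver_tree_restr(1) init_base_point_mem)

lemma first_free_freeze_first:
  assumes "silver_tree R" shows "first_free R < first_free (freeze_first R)"
proof -
  have K: "free_coords (freeze_first R) = free_coords R - {..<Suc (first_free R)}"
    using silver_tree_restr(2)[OF assms init_base_point_mem[OF assms, of "Suc (first_free R)"]]
    unfolding freeze_first_def by (simp only: length_init)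
  have "first_free (freeze_first R) \<in> free_coords (freeze_first R)"
    by (rule first_free_mem[OF freeze_first_silver_tree[OF assms]])
  then show ?thesis unfolding K by simp
qed

section \<open>Separating continuous images\<close>

lemma silver_forcingD:
  assumes "silver_forcing P" "T \<in> P"
  shows "silver_tree T" "u \<in> T \<Longrightarrow> restr T u \<in> P" "act_tree \<sigma> T \<in> P"
  using assms unfolding silver_forcing_def by blast+

text \<open>Shrink d to a branch that disagrees at one of its free coordinates q with f x, and c to a
  neighbourhood of x on which the q-th bit of f is constant.\<close>

lemma separate_continuous_image:
  assumes P: "silver_forcing P" and f: "cantor_continuous f" and c: "c \<in> P" and d: "d \<in> P"
  obtains c' d' where "c' \<in> P" "c' \<subseteq> c" "d' \<in> P" "d' \<subseteq> d" "branches d' \<inter> f ` branches c' = {}"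
proof -
  obtain x where x: "x \<in> branches c" using silver_tree_branch_ex silver_forcingD(1)[OF P c] by blast
  obtain z K where d_cube: "infinite K" "d = cube z K"
    using silver_tree_imp_cube[OF silver_forcingD(1)[OF P d]] by blast
  obtain q where q: "q \<in> K" using d_cube(1) infinite_imp_nonempty by blast
  define y where "y = z(q := \<not> f x q)"
  have y: "y \<in> branches d" unfolding d_cube(2) branches_cube y_def using q by auto
  obtain m where m: "\<forall>x'. init x' m = init x m \<longrightarrow> f x' q = f x q"
    using f unfolding cantor_continuous_def by blast
  define c' where "c' = restr c (init x m)"
  define d' where "d' = restr d (init y (Suc q))"
  have "c' \<in> P" unfolding c'_def using x by (intro silver_forcingD(2)[OF P c]) (simp add: branches_def)
  moreover have "d' \<in> P" unfolding d'_def using y by (intro silver_forcingD(2)[OF P d]) (simp add: branches_def)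
  moreover have "branches d' \<inter> f ` branches c' = {}"
  proof (rule ccontr)
    assume "branches d' \<inter> f ` branches c' \<noteq> {}"
    then obtain x' where x': "x' \<in> branches c'" "f x' \<in> branches d'" by blast
    have "init x' m = init x m" using init_branch_restr x'(1) c'_def by fastforce
    then have "f x' q = f x q" using m by blast
    moreover have "init (f x') (Suc q) = init y (Suc q)" using init_branch_restr x'(2) d'_def by fastforce
    then have "f x' q = y q" unfolding init_eq_iff by simp
    ultimately show False by (simp add: y_def)
  qed
  moreover have "c' \<subseteq> c" "d' \<subseteq> d" unfolding c'_def d'_def by (rule restr_subset)+
  ultimately show thesis using that by blast
qed

lemma separate_from_translate:
  assumes P: "silver_forcing P" and f: "cantor_continuous f" and R: "R \<in> P"
    and reg: "regular_on f R P"
  obtains R' where "R' \<in> P" "R' \<subseteq> R" "branches (act_tree \<psi> R') \<inter> f ` branches R' = {}"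
proof -
  have "\<not> (\<forall>x\<in>branches R. f x = act_real \<psi> x)"
    using reg R unfolding regular_on_def by (meson order_refl)
  then obtain x where x: "x \<in> branches R" "f x \<noteq> act_real \<psi> x" by blast
  then obtain q where q: "f x q \<noteq> act_real \<psi> x q" by blast
  obtain m0 where m0: "\<forall>x'. init x' m0 = init x m0 \<longrightarrow> f x' q = f x q"
    using f unfolding cantor_continuous_def by blast
  define m where "m = max m0 (Suc q)"
  define R' where "R' = restr R (init x m)"
  have near_x: "init x' m0 = init x m0 \<and> x' q = x q" if "x' \<in> branches R'" for x'
  proof -
    have "init x' m = init x m" using init_branch_restr that R'_def by fastforce
    then show ?thesis unfolding init_eq_iff m_def by simp
  qed
  have "R' \<in> P" unfolding R'_def using x by (intro silver_forcingD(2)[OF P R]) (simp add: branches_def)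
  moreover have "branches (act_tree \<psi> R') \<inter> f ` branches R' = {}"
  proof (rule ccontr)
    assume "branches (act_tree \<psi> R') \<inter> f ` branches R' \<noteq> {}"
    then obtain x' where x': "x' \<in> branches R'" "f x' \<in> branches (act_tree \<psi> R')" by blast
    then obtain x'' where x'': "x'' \<in> branches R'" "f x' = act_real \<psi> x''"
      unfolding branches_act_tree by (metis imageE)
    have "f x' q = f x q" using near_x[OF x'(1)] m0 by blast
    moreover have "act_real \<psi> x'' q = act_real \<psi> x q"
      using near_x[OF x''(1)] by (simp add: act_real_eq_bit_of)
    ultimately show False using q x''(2) by simp
  qed
  moreover have "R' \<subseteq> R" unfolding R'_def by (rule restr_subset)
  ultimately show thesis using that by blast
qed

section \<open>The fusion construction\<close>

text \<open>A task records, through indices into enumerations, one requirement on the final trees: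
  Cover k a i A asks that the translate of the i-th tree by task_str a A lie inside a member of
  the k-th predense set; Separate k l a b i j A B asks that the k-th function map the
  translate of the i-th tree by task_str a A, if it lies below the l-th condition, away from
  the translate of the j-th tree by task_str b B.\<close>

datatype task = Cover nat nat nat "nat set" | Separate nat nat nat nat nat nat "nat set" "nat set"

definition task_str :: "nat \<Rightarrow> nat set \<Rightarrow> bool list" where
  "task_str a A = xor_str (from_nat a) (flip_str A)"

definition decided :: "bool list set \<Rightarrow> bool list set \<Rightarrow> bool" where
  "decided T0 c \<longleftrightarrow> c \<subseteq> T0 \<or> branches c \<inter> branches T0 = {}"

locale silver_fusion =
  fixes P :: "bool list set set"
    and Dfam :: "bool list set set set"
    and Ffam :: "((nat \<Rightarrow> bool) \<Rightarrow> (nat \<Rightarrow> bool)) set"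
  assumes forcing: "silver_forcing P" and countable_P: "countable P" and nonempty: "P \<noteq> {}"
    and countable_Dfam: "countable Dfam" and countable_Ffam: "countable Ffam"
begin

lemma from_nat_into_P: "from_nat_into P i \<in> P"
  using nonempty by (rule from_nat_into)

definition admissible :: "(nat \<Rightarrow> bool list set) \<Rightarrow> bool" where
  "admissible R \<longleftrightarrow> (\<forall>i. R i \<in> P)"

definition refines :: "(nat \<Rightarrow> bool list set) \<Rightarrow> (nat \<Rightarrow> bool list set) \<Rightarrow> bool" where
  "refines R' R \<longleftrightarrow> (\<forall>i. R' i \<in> P \<and> R' i \<subseteq> R i)"

lemma refines_refl: "admissible R \<Longrightarrow> refines R R"
  by (simp add: admissible_def refines_def)

lemma refines_trans: "refines R'' R' \<Longrightarrow> refines R' R \<Longrightarrow> refines R'' R"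
  by (auto simp: refines_def)

lemma refines_admissible: "refines R' R \<Longrightarrow> admissible R'"
  by (simp add: admissible_def refines_def)

lemma refines_act_tree: "refines R' R \<Longrightarrow> act_tree \<tau> (R' i) \<subseteq> act_tree \<tau> (R i)"
  by (simp add: refines_def act_tree_mono)

lemma admissible_act_tree: "admissible R \<Longrightarrow> act_tree \<tau> (R i) \<in> P"
  by (simp add: admissible_def silver_forcingD(3)[OF forcing])

text \<open>Translations are involutions, so the translate by tau of the new i-th tree is the chosen c.\<close>

definition refine :: "(nat \<Rightarrow> bool list set) \<Rightarrow> nat \<Rightarrow> bool list \<Rightarrow> (bool list set \<Rightarrow> bool)
    \<Rightarrow> nat \<Rightarrow> bool list set" where
  "refine R i \<tau> \<Psi> = (if \<exists>c\<in>P. c \<subseteq> act_tree \<tau> (R i) \<and> \<Psi> c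
     then R(i := act_tree \<tau> (SOME c. c \<in> P \<and> c \<subseteq> act_tree \<tau> (R i) \<and> \<Psi> c)) else R)"

lemma refine_refines:
  assumes "admissible R" shows "refines (refine R i \<tau> \<Psi>) R"
proof (cases "\<exists>c\<in>P. c \<subseteq> act_tree \<tau> (R i) \<and> \<Psi> c")
  case True
  define c where "c = (SOME c. c \<in> P \<and> c \<subseteq> act_tree \<tau> (R i) \<and> \<Psi> c)"
  have c: "c \<in> P" "c \<subseteq> act_tree \<tau> (R i)" unfolding c_def using someI_ex[OF True[unfolded Bex_def]] by blast+
  have "act_tree \<tau> c \<subseteq> R i" using act_tree_mono[OF c(2), of \<tau>] by simp
  moreover have "act_tree \<tau> c \<in> P" using c(1) by (rule silver_forcingD(3)[OF forcing])
  moreover have "refine R i \<tau> \<Psi> = R(i := act_tree \<tau> c)" using True by (simp add: refine_def c_def)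
  ultimately show ?thesis using assms by (simp add: refines_def admissible_def)
next
  case False
  then have "refine R i \<tau> \<Psi> = R" unfolding refine_def by (rule if_not_P)
  then show ?thesis using assms by (simp add: refines_refl)
qed

lemma refine_achieves:
  assumes "\<exists>c\<in>P. c \<subseteq> act_tree \<tau> (R i) \<and> \<Psi> c"
  shows "\<Psi> (act_tree \<tau> (refine R i \<tau> \<Psi> i))"
proof -
  define c where "c = (SOME c. c \<in> P \<and> c \<subseteq> act_tree \<tau> (R i) \<and> \<Psi> c)"
  have "\<Psi> c" unfolding c_def using someI_ex[OF assms[unfolded Bex_def]] by blast
  moreover have "refine R i \<tau> \<Psi> i = act_tree \<tau> c" using assms by (simp add: refine_def c_def)
  ultimately show ?thesis by simp
qed

definition refine2 :: "(nat \<Rightarrow> bool list set) \<Rightarrow> nat \<Rightarrow> nat \<Rightarrow> bool list \<Rightarrow> bool list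
    \<Rightarrow> (bool list set \<Rightarrow> bool list set \<Rightarrow> bool) \<Rightarrow> nat \<Rightarrow> bool list set" where
  "refine2 R i j \<tau> \<tau>' \<Psi> =
    (if \<exists>c\<in>P. \<exists>d\<in>P. c \<subseteq> act_tree \<tau> (R i) \<and> d \<subseteq> act_tree \<tau>' (R j) \<and> \<Psi> c d
     then (let cd = SOME cd. fst cd \<in> P \<and> snd cd \<in> P \<and> fst cd \<subseteq> act_tree \<tau> (R i) \<and>
                             snd cd \<subseteq> act_tree \<tau>' (R j) \<and> \<Psi> (fst cd) (snd cd)
           in R(i := act_tree \<tau> (fst cd), j := act_tree \<tau>' (snd cd)))
     else R)"

lemma refine2_eq:
  assumes "\<exists>c\<in>P. \<exists>d\<in>P. c \<subseteq> act_tree \<tau> (R i) \<and> d \<subseteq> act_tree \<tau>' (R j) \<and> \<Psi> c d"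
  obtains c d where "c \<in> P" "d \<in> P" "c \<subseteq> act_tree \<tau> (R i)" "d \<subseteq> act_tree \<tau>' (R j)" "\<Psi> c d"
    "refine2 R i j \<tau> \<tau>' \<Psi> = R(i := act_tree \<tau> c, j := act_tree \<tau>' d)"
proof -
  let ?Q = "\<lambda>cd. fst cd \<in> P \<and> snd cd \<in> P \<and> fst cd \<subseteq> act_tree \<tau> (R i) \<and>
                 snd cd \<subseteq> act_tree \<tau>' (R j) \<and> \<Psi> (fst cd) (snd cd)"
  have "\<exists>cd. ?Q cd" using assms by auto
  then have "?Q (SOME cd. ?Q cd)" by (rule someI_ex)
  moreover have "refine2 R i j \<tau> \<tau>' \<Psi> = R(i := act_tree \<tau> (fst (SOME cd. ?Q cd)), j := act_tree \<tau>' (snd (SOME cd. ?Q cd)))"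
    using assms unfolding refine2_def Let_def by (simp only: if_True)
  ultimately show thesis using that by blast
qed

lemma refine2_refines:
  assumes "admissible R" shows "refines (refine2 R i j \<tau> \<tau>' \<Psi>) R"
proof (cases "\<exists>c\<in>P. \<exists>d\<in>P. c \<subseteq> act_tree \<tau> (R i) \<and> d \<subseteq> act_tree \<tau>' (R j) \<and> \<Psi> c d")
  case True
  then obtain c d where cd: "c \<in> P" "d \<in> P" "c \<subseteq> act_tree \<tau> (R i)" "d \<subseteq> act_tree \<tau>' (R j)"
    and eq: "refine2 R i j \<tau> \<tau>' \<Psi> = R(i := act_tree \<tau> c, j := act_tree \<tau>' d)"
    by (rule refine2_eq)
  have "act_tree \<tau> c \<subseteq> R i" "act_tree \<tau>' d \<subseteq> R j"
    using act_tree_mono[OF cd(3), of \<tau>] act_tree_mono[OF cd(4), of \<tau>'] by simp_all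
  moreover have "act_tree \<tau> c \<in> P" "act_tree \<tau>' d \<in> P"
    using cd(1,2) by (simp_all add: silver_forcingD(3)[OF forcing])
  ultimately show ?thesis using assms unfolding eq by (simp add: refines_def admissible_def)
next
  case False
  then have "refine2 R i j \<tau> \<tau>' \<Psi> = R" unfolding refine2_def by (rule if_not_P)
  then show ?thesis using assms by (simp add: refines_refl)
qed

lemma refine2_achieves:
  assumes "i \<noteq> j" "\<exists>c\<in>P. \<exists>d\<in>P. c \<subseteq> act_tree \<tau> (R i) \<and> d \<subseteq> act_tree \<tau>' (R j) \<and> \<Psi> c d"
  shows "\<Psi> (act_tree \<tau> (refine2 R i j \<tau> \<tau>' \<Psi> i)) (act_tree \<tau>' (refine2 R i j \<tau> \<tau>' \<Psi> j))"
  using assms(2) by (rule refine2_eq) (use assms(1) in simp)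

definition covered :: "bool list set set \<Rightarrow> bool list set \<Rightarrow> bool" where
  "covered D c \<longleftrightarrow> (D \<subseteq> P \<and> predense D P \<longrightarrow> (\<exists>S\<in>D. c \<subseteq> S))"

definition separated ::
  "((nat \<Rightarrow> bool) \<Rightarrow> (nat \<Rightarrow> bool)) \<Rightarrow> bool list set \<Rightarrow> bool list set \<Rightarrow> bool list set \<Rightarrow> bool" where
  "separated f T0 c d \<longleftrightarrow>
     (c \<subseteq> T0 \<and> cantor_continuous f \<and> regular_on f T0 P \<longrightarrow> branches d \<inter> f ` branches c = {})"

lemma exists_covered:
  assumes "c \<in> P" shows "\<exists>c'\<in>P. c' \<subseteq> c \<and> covered D c'"
proof (cases "D \<subseteq> P \<and> predense D P")
  case True
  then obtain S c' where "S \<in> D" "c' \<in> P" "c' \<subseteq> c" "c' \<subseteq> S"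
    using assms unfolding predense_def by blast
  then show ?thesis unfolding covered_def by blast
qed (use assms in \<open>auto simp: covered_def\<close>)

lemma exists_decided:
  assumes "c \<in> P" shows "\<exists>c'\<in>P. c' \<subseteq> c \<and> decided T0 c'"
proof (cases "c \<subseteq> T0")
  case False
  then obtain s where s: "s \<in> c" "s \<notin> T0" by blast
  have False if "x \<in> branches (restr c s)" "x \<in> branches T0" for x
  proof -
    have "init x (length s) = s" using that(1) by (rule init_branch_restr)
    moreover have "init x (length s) \<in> T0" using that(2) by (simp add: branches_def)
    ultimately show False using s(2) by simp
  qed
  then have "decided T0 (restr c s)" unfolding decided_def by blast
  then show ?thesis using silver_forcingD(2)[OF forcing assms s(1)] restr_subset by blast
next
  case True
  then show ?thesis using assms unfolding decided_def by blast
qed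

lemma exists_separated_translate:
  assumes "c \<in> P" shows "\<exists>c'\<in>P. c' \<subseteq> c \<and> separated f T0 c' (act_tree \<psi> c')"
proof (cases "c \<subseteq> T0 \<and> cantor_continuous f \<and> regular_on f T0 P")
  case True
  then have "regular_on f c P" unfolding regular_on_def by blast
  with True obtain c' where "c' \<in> P" "c' \<subseteq> c" "branches (act_tree \<psi> c') \<inter> f ` branches c' = {}"
    using separate_from_translate[OF forcing _ assms] by blast
  then show ?thesis unfolding separated_def by blast
qed (use assms in \<open>auto simp: separated_def\<close>)

lemma exists_separated_pair:
  assumes "c \<in> P" "d \<in> P"
  shows "\<exists>c'\<in>P. \<exists>d'\<in>P. c' \<subseteq> c \<and> d' \<subseteq> d \<and> separated f T0 c' d'"
proof (cases "cantor_continuous f")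
  case True
  then obtain c' d' where "c' \<in> P" "c' \<subseteq> c" "d' \<in> P" "d' \<subseteq> d" "branches d' \<inter> f ` branches c' = {}"
    using separate_continuous_image[OF forcing _ assms] by blast
  then show ?thesis unfolding separated_def by blast
qed (use assms in \<open>auto simp: separated_def\<close>)

fun perform :: "task \<Rightarrow> (nat \<Rightarrow> bool list set) \<Rightarrow> nat \<Rightarrow> bool list set" where
  "perform (Cover k a i A) R = refine R i (task_str a A) (covered (from_nat_into Dfam k))"
| "perform (Separate k l a b i j A B) R =
    (let T0 = from_nat_into P l; f = from_nat_into Ffam k; \<tau> = task_str a A; \<tau>' = task_str b B;
         R' = refine R i \<tau> (decided T0)
     in if i = j then refine R' i \<tau> (\<lambda>c. separated f T0 c (act_tree \<tau>' (act_tree \<tau> c)))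
        else refine2 R' i j \<tau> \<tau>' (separated f T0))"

fun achieved :: "task \<Rightarrow> (nat \<Rightarrow> bool list set) \<Rightarrow> bool" where
  "achieved (Cover k a i A) R = covered (from_nat_into Dfam k) (act_tree (task_str a A) (R i))"
| "achieved (Separate k l a b i j A B) R =
    (let T0 = from_nat_into P l; f = from_nat_into Ffam k;
         c = act_tree (task_str a A) (R i); d = act_tree (task_str b B) (R j)
     in branches c \<inter> branches T0 = {} \<or>
        (cantor_continuous f \<and> regular_on f T0 P \<longrightarrow> branches d \<inter> f ` branches c = {}))"

lemma achieved_refines:
  assumes "achieved t R" "refines R' R" shows "achieved t R'"
proof (cases t)
  case (Cover k a i A)
  then show ?thesis
    using assms(1) refines_act_tree[OF assms(2), of "task_str a A" i] by (auto simp: covered_def)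
next
  case (Separate k l a b i j A B)
  have "branches (act_tree \<tau> (R' n)) \<subseteq> branches (act_tree \<tau> (R n))" for \<tau> n
    by (rule branches_mono[OF refines_act_tree[OF assms(2)]])
  with assms(1) show ?thesis unfolding Separate achieved.simps Let_def by blast
qed

lemma achieved_SeparateI:
  assumes "decided T0 c" "c' \<subseteq> c" "separated f T0 c' d"
  shows "branches c' \<inter> branches T0 = {} \<or>
    (cantor_continuous f \<and> regular_on f T0 P \<longrightarrow> branches d \<inter> f ` branches c' = {})"
  using assms branches_mono[OF assms(2)] unfolding decided_def separated_def by blast

lemma perform_refines:
  assumes "admissible R" shows "refines (perform t R) R"
proof (cases t)
  case (Cover k a i A)
  then show ?thesis using assms by (simp add: refine_refines)
next
  case (Separate k l a b i j A B)
  let ?R' = "refine R i (task_str a A) (decided (from_nat_into P l))"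
  have R': "refines ?R' R" using assms by (rule refine_refines)
  have "admissible ?R'" using R' by (rule refines_admissible)
  note step1 = refines_trans[OF refine_refines[OF this] R'] and step2 = refines_trans[OF refine2_refines[OF this] R']
  show ?thesis
  proof (cases "i = j")
    case True
    show ?thesis unfolding Separate perform.simps Let_def if_P[OF True] by (rule step1)
  next
    case False
    show ?thesis unfolding Separate perform.simps Let_def if_not_P[OF False] by (rule step2)
  qed
qed

lemma perform_achieves:
  assumes R: "admissible R" shows "achieved t (perform t R)"
proof (cases t)
  case (Cover k a i A)
  then show ?thesis using refine_achieves[OF exists_covered[OF admissible_act_tree[OF R]]] by simp
next
  case (Separate k l a b i j A B)
  define T0 f \<tau> \<tau>' where "T0 = from_nat_into P l" and "f = from_nat_into Ffam k"
    and "\<tau> = task_str a A" and "\<tau>' = task_str b B"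
  define R' where "R' = refine R i \<tau> (decided T0)"
  have "refines R' R" unfolding R'_def using R by (rule refine_refines)
  then have R': "admissible R'" by (rule refines_admissible)
  have dec: "decided T0 (act_tree \<tau> (R' i))"
    unfolding R'_def by (rule refine_achieves, rule exists_decided, rule admissible_act_tree, fact)
  show ?thesis
  proof (cases "i = j")
    case True
    define R'' where "R'' = refine R' i \<tau> (\<lambda>c. separated f T0 c (act_tree \<tau>' (act_tree \<tau> c)))"
    have ex: "\<exists>c\<in>P. c \<subseteq> act_tree \<tau> (R' i) \<and> separated f T0 c (act_tree \<tau>' (act_tree \<tau> c))"
      using exists_separated_translate[OF admissible_act_tree[OF R'], of \<tau> i f T0 "xor_str \<tau>' \<tau>"]
      unfolding act_tree_act_tree .
    have "separated f T0 (act_tree \<tau> (R'' i)) (act_tree \<tau>' (R'' i))"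
      unfolding R''_def using refine_achieves[where R = R' and i = i, OF ex] by simp
    moreover have "act_tree \<tau> (R'' i) \<subseteq> act_tree \<tau> (R' i)"
      unfolding R''_def by (rule refines_act_tree[OF refine_refines[OF R']])
    moreover have "perform (Separate k l a b i j A B) R = R''"
      using True by (simp add: Separate Let_def R''_def R'_def T0_def f_def \<tau>_def \<tau>'_def)
    ultimately show ?thesis
      using achieved_SeparateI[OF dec] True by (simp add: Separate Let_def T0_def f_def \<tau>_def \<tau>'_def)
  next
    case False
    define R'' where "R'' = refine2 R' i j \<tau> \<tau>' (separated f T0)"
    have "separated f T0 (act_tree \<tau> (R'' i)) (act_tree \<tau>' (R'' j))"
      unfolding R''_def using False
      by (rule refine2_achieves, intro exists_separated_pair admissible_act_tree R')
    moreover have "act_tree \<tau> (R'' i) \<subseteq> act_tree \<tau> (R' i)"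
      unfolding R''_def by (rule refines_act_tree[OF refine2_refines[OF R']])
    moreover have "perform (Separate k l a b i j A B) R = R''"
      using False by (simp add: Separate Let_def R''_def R'_def T0_def f_def \<tau>_def \<tau>'_def)
    ultimately show ?thesis
      using achieved_SeparateI[OF dec] by (simp add: Separate Let_def T0_def f_def \<tau>_def \<tau>'_def)
  qed
qed

lemma fold_perform_refines: "admissible R \<Longrightarrow> refines (fold perform ts R) R"
proof (induction ts arbitrary: R)
  case (Cons t ts)
  have step: "refines (perform t R) R" using Cons.prems by (rule perform_refines)
  then show ?case using Cons.IH[OF refines_admissible[OF step]] refines_trans by simp
qed (simp add: refines_refl)

lemma fold_perform_achieves: "admissible R \<Longrightarrow> t \<in> set ts \<Longrightarrow> achieved t (fold perform ts R)"
proof (induction ts arbitrary: R)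
  case (Cons t' ts)
  have R': "admissible (perform t' R)" using perform_refines[OF Cons.prems(1)] by (rule refines_admissible)
  show ?case
  proof (cases "t \<in> set ts")
    case False
    then have "t = t'" using Cons.prems(2) by simp
    then show ?thesis
      using achieved_refines[OF perform_achieves[OF Cons.prems(1)] fold_perform_refines[OF R']] by simp
  qed (use Cons.IH R' in simp)
qed simp

definition tasks :: "nat \<Rightarrow> (nat \<Rightarrow> nat list) \<Rightarrow> task list" where
  "tasks n F =
    [Cover k a i A. k \<leftarrow> [0..<n], a \<leftarrow> [0..<n], i \<leftarrow> [0..<n], A \<leftarrow> map set (subseqs (F i))] @
    [Separate k l a b i j A B. k \<leftarrow> [0..<n], l \<leftarrow> [0..<n], a \<leftarrow> [0..<n], b \<leftarrow> [0..<n],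
       i \<leftarrow> [0..<n], j \<leftarrow> [0..<n], A \<leftarrow> map set (subseqs (F i)), B \<leftarrow> map set (subseqs (F j))]"

lemma Cover_mem_tasks:
  "k < n \<Longrightarrow> a < n \<Longrightarrow> i < n \<Longrightarrow> A \<subseteq> set (F i) \<Longrightarrow> Cover k a i A \<in> set (tasks n F)"
  unfolding tasks_def using subset_subseqs[of A "F i"] by (simp add: image_iff)

lemma Separate_mem_tasks:
  "k < n \<Longrightarrow> l < n \<Longrightarrow> a < n \<Longrightarrow> b < n \<Longrightarrow> i < n \<Longrightarrow> j < n \<Longrightarrow>
    A \<subseteq> set (F i) \<Longrightarrow> B \<subseteq> set (F j) \<Longrightarrow> Separate k l a b i j A B \<in> set (tasks n F)"
  unfolding tasks_def using subset_subseqs[of A "F i"] subset_subseqs[of B "F j"] by (simp add: image_iff)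

text \<open>Only finitely many tasks arise at each stage, because the fusion trees will consist of
  flips of stage trees at splitting coordinates only.\<close>

primrec stages :: "nat \<Rightarrow> (nat \<Rightarrow> bool list set) \<times> (nat \<Rightarrow> nat list)" where
  "stages 0 = (from_nat_into P, \<lambda>_. [])"
| "stages (Suc n) =
    (let F = (\<lambda>i. first_free (fst (stages n) i) # snd (stages n) i)
     in (fold perform (tasks n F) (\<lambda>i. freeze_first (fst (stages n) i)), F))"

definition stage :: "nat \<Rightarrow> nat \<Rightarrow> bool list set" where
  "stage i n = fst (stages n) i"

definition splits :: "nat \<Rightarrow> nat \<Rightarrow> nat set" where
  "splits i n = set (snd (stages n) i)"

definition split_coord :: "nat \<Rightarrow> nat \<Rightarrow> nat" where
  "split_coord i n = first_free (stage i n)"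

lemma stages_Suc:
  "snd (stages (Suc n)) = (\<lambda>i. split_coord i n # snd (stages n) i)"
  "(\<lambda>i. stage i (Suc n)) = fold perform (tasks n (snd (stages (Suc n)))) (\<lambda>i. freeze_first (stage i n))"
  by (simp_all add: Let_def stage_def[abs_def] split_coord_def)

lemma freeze_first_mem: "R \<in> P \<Longrightarrow> freeze_first R \<in> P"
  unfolding freeze_first_def
  by (intro silver_forcingD(2)[OF forcing] init_base_point_mem silver_forcingD(1)[OF forcing])

lemma stages_admissible: "admissible (\<lambda>i. stage i n)"
proof (induction n)
  case 0
  then show ?case by (simp add: admissible_def stage_def from_nat_into_P)
next
  case (Suc n)
  then have "admissible (\<lambda>i. freeze_first (stage i n))" by (simp add: admissible_def freeze_first_mem)
  then show ?case unfolding stages_Suc(2) by (rule refines_admissible[OF fold_perform_refines])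
qed

lemma stage_mem: "stage i n \<in> P"
  using stages_admissible by (simp add: admissible_def)

lemma stage_silver_tree: "silver_tree (stage i n)"
  using silver_forcingD(1)[OF forcing stage_mem] .

lemma stage_Suc_subset: "stage i (Suc n) \<subseteq> freeze_first (stage i n)"
proof -
  have "admissible (\<lambda>i. freeze_first (stage i n))"
    using stages_admissible by (simp add: admissible_def freeze_first_mem)
  then have "refines (\<lambda>i. stage i (Suc n)) (\<lambda>i. freeze_first (stage i n))"
    unfolding stages_Suc(2) by (rule fold_perform_refines)
  then show ?thesis unfolding refines_def by blast
qed

lemma stage_antimono: "n \<le> m \<Longrightarrow> stage i m \<subseteq> stage i n"
proof (induction m rule: dec_induct)
  case (step m)
  then show ?case using stage_Suc_subset freeze_first_subset by blast
qed simp

lemma achieved_at_stage: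
  "t \<in> set (tasks n (snd (stages (Suc n)))) \<Longrightarrow> achieved t (\<lambda>i. stage i (Suc n))"
  unfolding stages_Suc(2)
  by (rule fold_perform_achieves) (simp add: admissible_def freeze_first_mem stage_mem)

lemma split_coord_strict_mono: "strict_mono (split_coord i)"
  unfolding strict_mono_Suc_iff
proof
  fix n
  have "split_coord i n < first_free (freeze_first (stage i n))"
    unfolding split_coord_def by (rule first_free_freeze_first[OF stage_silver_tree])
  also have "\<dots> \<le> split_coord i (Suc n)"
    unfolding split_coord_def by (rule first_free_mono[OF stage_silver_tree stage_Suc_subset])
  finally show "split_coord i n < split_coord i (Suc n)" .
qed

lemma splits_Suc: "splits i (Suc m) = insert (split_coord i m) (splits i m)"
  by (simp add: splits_def stages_Suc(1) del: stages.simps)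

lemma splits_eq: "splits i n = split_coord i ` {..<n}"
  by (induction n) (simp_all add: splits_Suc lessThan_Suc, simp add: splits_def)

lemma finite_splits: "finite (splits i n)"
  by (simp add: splits_def)

text \<open>Each splitting coordinate added after stage n is still free when it is added, so
  flipping these coordinates maps the later stages into stage n.\<close>

lemma act_tree_flip_stage:
  "n \<le> m \<Longrightarrow> A \<subseteq> splits i m - splits i n \<Longrightarrow> act_tree (flip_str A) (stage i m) \<subseteq> stage i n"
proof (induction m arbitrary: A rule: dec_induct)
  case (step m)
  let ?p = "split_coord i m"
  show ?case
  proof (cases "?p \<in> A")
    case False
    then have "A \<subseteq> splits i m - splits i n" using step.prems splits_Suc by auto
    have "act_tree (flip_str A) (stage i (Suc m)) \<subseteq> act_tree (flip_str A) (stage i m)"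
      by (intro act_tree_mono stage_antimono) simp
    also have "\<dots> \<subseteq> stage i n" using \<open>A \<subseteq> splits i m - splits i n\<close> by (rule step.IH)
    finally show ?thesis .
  next
    case True
    define A' where "A' = A - {?p}"
    have A: "A = insert ?p A'" "?p \<notin> A'" "finite A'"
      using True finite_subset[OF step.prems finite_Diff[OF finite_splits]] A'_def by auto
    have A'_sub: "A' \<subseteq> splits i m - splits i n" using step.prems splits_Suc A'_def by auto
    have "act_tree (flip_str A) (stage i (Suc m))
        = act_tree (flip_str A') (act_tree (flip_str {?p}) (stage i (Suc m)))"
      unfolding A(1) by (rule act_tree_flip_str_insert[OF A(3,2)])
    also have "\<dots> \<subseteq> act_tree (flip_str A') (act_tree (flip_str {?p}) (stage i m))"
      by (intro act_tree_mono stage_antimono) simp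
    also have "act_tree (flip_str {?p}) (stage i m) = stage i m"
      unfolding split_coord_def by (rule act_tree_flip_free[OF stage_silver_tree first_free_mem[OF stage_silver_tree]])
    also have "act_tree (flip_str A') (stage i m) \<subseteq> stage i n" using A'_sub by (rule step.IH)
    finally show ?thesis .
  qed
qed (simp add: act_tree_flip_str_empty)

definition limit_base :: "nat \<Rightarrow> nat \<Rightarrow> bool" where
  "limit_base i j = base_point (stage i (Suc j)) j"

lemma base_point_stage: "Suc j \<le> m \<Longrightarrow> base_point (stage i m) j = limit_base i j"
proof -
  assume m: "Suc j \<le> m"
  have "j < split_coord i (Suc j)"
    using strict_mono_imp_increasing[OF split_coord_strict_mono, of "Suc j" i] by simp
  then have "j \<notin> free_coords (stage i (Suc j))"
    unfolding split_coord_def by (rule not_free_below_first_free)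
  then show ?thesis
    unfolding limit_base_def by (rule base_point_subtree[OF stage_silver_tree stage_silver_tree stage_antimono[OF m]])
qed

lemma init_limit_base_mem: "L \<le> m \<Longrightarrow> init (limit_base i) L \<in> stage i m"
proof -
  assume "L \<le> m"
  then have "init (limit_base i) L = init (base_point (stage i m)) L"
    unfolding init_eq_iff by (simp add: base_point_stage)
  then show ?thesis using init_base_point_mem[OF stage_silver_tree] by simp
qed

text \<open>Each initial segment of y is a flip, at splitting coordinates added after stage n, of an
  initial segment of limit_base, and the latter lies in a later stage.\<close>

lemma branch_stage:
  assumes y: "\<And>j. j \<notin> range (split_coord i) - splits i n \<Longrightarrow> y j = limit_base i j"
  shows "y \<in> branches (stage i n)"
  unfolding branches_def
proof (intro CollectI allI)
  fix L
  define m where "m = Suc (n + L)"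
  define B where "B = {j. j < L \<and> j \<in> splits i m - splits i n \<and> y j \<noteq> limit_base i j}"
  have B: "finite B" "B \<subseteq> splits i m - splits i n" unfolding B_def by auto
  have "y j = (limit_base i j \<noteq> (j \<in> B))" if "j < L" for j
  proof (cases "j \<in> splits i m - splits i n")
    case False
    have "j \<notin> range (split_coord i) - splits i n"
    proof
      assume "j \<in> range (split_coord i) - splits i n"
      then obtain k where k: "j = split_coord i k" "j \<notin> splits i n" by auto
      have "k < m"
        using strict_mono_imp_increasing[OF split_coord_strict_mono, of k i] k(1) that m_def by simp
      then show False using False k unfolding splits_eq by auto
    qed
    then show ?thesis using y B_def by auto
  qed (auto simp: B_def that)
  then have "init y L = act_str (flip_str B) (init (limit_base i) L)"
    by (intro nth_equalityI) (simp_all add: bit_of_flip_str[OF B(1)])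
  moreover have "init (limit_base i) L \<in> stage i m" by (rule init_limit_base_mem) (simp add: m_def)
  ultimately have "init y L \<in> act_tree (flip_str B) (stage i m)" by (simp add: mem_act_tree)
  then show "init y L \<in> stage i n" using act_tree_flip_stage[OF _ B(2)] m_def by auto
qed

definition fusion_tree :: "nat \<Rightarrow> bool list set" where
  "fusion_tree i = cube (limit_base i) (range (split_coord i))"

lemma fusion_tree_silver_tree: "silver_tree (fusion_tree i)"
  unfolding fusion_tree_def
  by (rule silver_tree_cube, rule range_inj_infinite, rule strict_mono_imp_inj_on[OF split_coord_strict_mono])

lemma fusion_tree_subset: "fusion_tree i \<subseteq> from_nat_into P i"
proof (rule silver_tree_subset_of_branches[OF fusion_tree_silver_tree], rule subsetI)
  fix x assume "x \<in> branches (fusion_tree i)"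
  then have "x \<in> branches (stage i 0)"
    by (intro branch_stage) (auto simp: fusion_tree_def branches_cube splits_def)
  then show "x \<in> branches (from_nat_into P i)" by (simp add: stage_def)
qed

lemma branch_fusion_tree:
  assumes x: "x \<in> branches (fusion_tree i)"
  obtains A where "A \<subseteq> splits i n" "x \<in> branches (act_tree (flip_str A) (stage i n))"
proof -
  define A where "A = {j \<in> splits i n. x j \<noteq> limit_base i j}"
  have A: "finite A" "A \<subseteq> splits i n" using finite_splits by (auto simp: A_def)
  have bit_A: "bit_of (flip_str A) j \<longleftrightarrow> j \<in> splits i n \<and> x j \<noteq> limit_base i j" for j
    using bit_of_flip_str[OF A(1)] unfolding A_def by simp
  have "act_real (flip_str A) x \<in> branches (stage i n)"
  proof (rule branch_stage)
    fix j assume "j \<notin> range (split_coord i) - splits i n"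
    then have "j \<in> splits i n \<or> x j = limit_base i j"
      using x unfolding fusion_tree_def branches_cube by blast
    then show "act_real (flip_str A) x j = limit_base i j"
      by (auto simp: act_real_eq_bit_of bit_A)
  qed
  then have "x \<in> branches (act_tree (flip_str A) (stage i n))"
    unfolding branches_act_tree by (metis act_real_invol image_eqI)
  then show thesis using that A(2) by blast
qed

section \<open>The countable forcing\<close>

definition fusion_forcing :: "bool list set set" where
  "fusion_forcing = {act_tree \<sigma> (restr (fusion_tree i) s) | i \<sigma> s. s \<in> fusion_tree i}"

lemma countable_fusion_forcing: "countable fusion_forcing"
proof -
  have "fusion_forcing \<subseteq> (\<lambda>(i, \<sigma>, s). act_tree \<sigma> (restr (fusion_tree i) s)) ` UNIV"
    unfolding fusion_forcing_def by auto
  then show ?thesis by (rule countable_subset) simp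
qed

lemma silver_forcing_fusion_forcing: "silver_forcing fusion_forcing"
  unfolding silver_forcing_def
proof (intro conjI ballI allI)
  fix T assume "T \<in> fusion_forcing"
  then show "silver_tree T" unfolding fusion_forcing_def
    using silver_tree_act_tree silver_tree_restr(1) fusion_tree_silver_tree by blast
next
  fix T u assume T: "T \<in> fusion_forcing" and u: "u \<in> T"
  then obtain i \<sigma> s where Ts: "T = act_tree \<sigma> (restr (fusion_tree i) s)" "s \<in> fusion_tree i"
    unfolding fusion_forcing_def by blast
  define v where "v = act_str \<sigma> u"
  have v: "v \<in> restr (fusion_tree i) s" using u Ts mem_act_tree v_def by blast
  then have "v \<in> fusion_tree i" "prefix s v \<or> prefix v s" by (auto simp: restr_def)
  moreover have "restr T u = act_tree \<sigma> (restr (restr (fusion_tree i) s) v)"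
    unfolding Ts v_def by (rule restr_act_tree)
  ultimately have "restr T u = act_tree \<sigma> (restr (fusion_tree i) v) \<or>
      restr T u = act_tree \<sigma> (restr (fusion_tree i) s)"
    using restr_restr_of_prefix restr_restr_of_prefix' by metis
  then show "restr T u \<in> fusion_forcing" unfolding fusion_forcing_def using Ts(2) \<open>v \<in> fusion_tree i\<close> by blast
next
  fix T \<sigma>' assume "T \<in> fusion_forcing"
  then obtain i \<sigma> s where Ts: "T = act_tree \<sigma> (restr (fusion_tree i) s)" "s \<in> fusion_tree i"
    unfolding fusion_forcing_def by blast
  have "act_tree \<sigma>' T = act_tree (xor_str \<sigma>' \<sigma>) (restr (fusion_tree i) s)"
    unfolding Ts by (rule act_tree_act_tree)
  then show "act_tree \<sigma>' T \<in> fusion_forcing" unfolding fusion_forcing_def using Ts(2) by blast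
qed

lemma branches_fusion_forcing:
  assumes "T \<in> fusion_forcing"
  obtains i a where
    "\<And>N x. x \<in> branches T \<Longrightarrow> \<exists>A\<subseteq>splits i N. x \<in> branches (act_tree (task_str a A) (stage i N))"
proof -
  obtain i \<sigma> s where T: "T = act_tree \<sigma> (restr (fusion_tree i) s)"
    using assms unfolding fusion_forcing_def by blast
  have "\<exists>A\<subseteq>splits i N. x \<in> branches (act_tree (task_str (to_nat \<sigma>) A) (stage i N))"
    if x: "x \<in> branches T" for N x
  proof -
    obtain x0 where x0: "x0 \<in> branches (fusion_tree i)" "x = act_real \<sigma> x0"
      using x branches_mono[OF restr_subset] unfolding T branches_act_tree by blast
    obtain A where A: "A \<subseteq> splits i N" "x0 \<in> branches (act_tree (flip_str A) (stage i N))"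
      by (rule branch_fusion_tree[OF x0(1)])
    have "x \<in> branches (act_tree \<sigma> (act_tree (flip_str A) (stage i N)))"
      unfolding x0(2) branches_act_tree[of \<sigma>] using A(2) by (rule imageI)
    then show ?thesis unfolding task_str_def from_nat_to_nat act_tree_act_tree using A(1) by blast
  qed
  then show thesis by (rule that)
qed

lemma fusion_forcing_dense: "T \<in> fusion_forcing \<union> P \<Longrightarrow> \<exists>U\<in>fusion_forcing. U \<subseteq> T"
proof (elim UnE)
  assume "T \<in> P"
  then obtain i where i: "from_nat_into P i = T" using from_nat_into_surj[OF countable_P] by blast
  have "act_tree [] (restr (fusion_tree i) []) = fusion_tree i"
    by (simp add: restr_Nil act_tree_Nil)
  moreover have "[] \<in> fusion_tree i" by (simp add: fusion_tree_def mem_cube)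
  ultimately have "fusion_tree i \<in> fusion_forcing" unfolding fusion_forcing_def by (metis (mono_tags, lifting) mem_Collect_eq)
  then show ?thesis using fusion_tree_subset i by blast
qed blast

lemma fusion_forcing_covers:
  assumes D: "D \<in> Dfam" "D \<subseteq> P" "predense D P" and T: "T \<in> fusion_forcing"
  shows "\<exists>D'. finite D' \<and> D' \<subseteq> D \<and> T \<subseteq> \<Union>D'"
proof -
  obtain i a where branch:
    "\<And>N x. x \<in> branches T \<Longrightarrow> \<exists>A\<subseteq>splits i N. x \<in> branches (act_tree (task_str a A) (stage i N))"
    using branches_fusion_forcing[OF T] by blast
  obtain k where k: "from_nat_into Dfam k = D" using from_nat_into_surj[OF countable_Dfam D(1)] by blast
  define n where "n = Suc (k + a + i)"
  have "\<exists>S\<in>D. act_tree (task_str a A) (stage i (Suc n)) \<subseteq> S" if "A \<subseteq> splits i (Suc n)" for A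
  proof -
    have "Cover k a i A \<in> set (tasks n (snd (stages (Suc n))))"
      using that by (intro Cover_mem_tasks) (simp_all add: n_def splits_def)
    then show ?thesis using achieved_at_stage D k by (fastforce simp: covered_def)
  qed
  then obtain g where g: "\<And>A. A \<subseteq> splits i (Suc n) \<Longrightarrow> g A \<in> D \<and> act_tree (task_str a A) (stage i (Suc n)) \<subseteq> g A"
    by metis
  define D' where "D' = g ` Pow (splits i (Suc n))"
  have "branches T \<subseteq> branches (\<Union>D')"
  proof
    fix x assume "x \<in> branches T"
    then obtain A where A: "A \<subseteq> splits i (Suc n)" "x \<in> branches (act_tree (task_str a A) (stage i (Suc n)))"
      using branch by blast
    have "act_tree (task_str a A) (stage i (Suc n)) \<subseteq> \<Union>D'" using g[OF A(1)] A(1) unfolding D'_def by blast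
    then show "x \<in> branches (\<Union>D')" using A(2) branches_mono by blast
  qed
  then have "T \<subseteq> \<Union>D'"
    using silver_tree_subset_of_branches silver_forcingD(1)[OF silver_forcing_fusion_forcing T] by blast
  moreover have "finite D'" "D' \<subseteq> D" unfolding D'_def using finite_splits g by auto
  ultimately show ?thesis by blast
qed

lemma fusion_forcing_separates:
  assumes T0: "T0 \<in> P" and f: "f \<in> Ffam" "cantor_continuous f" "regular_on f T0 P"
    and U: "U \<in> fusion_forcing" "U \<subseteq> T0" and V: "V \<in> fusion_forcing"
  shows "branches V \<inter> f ` branches U = {}"
proof (rule ccontr)
  assume "branches V \<inter> f ` branches U \<noteq> {}"
  then obtain x where x: "x \<in> branches U" "f x \<in> branches V" by blast
  obtain i a where branch_U:
    "\<And>N x. x \<in> branches U \<Longrightarrow> \<exists>A\<subseteq>splits i N. x \<in> branches (act_tree (task_str a A) (stage i N))"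
    using branches_fusion_forcing[OF U(1)] by blast
  obtain j b where branch_V:
    "\<And>N x. x \<in> branches V \<Longrightarrow> \<exists>A\<subseteq>splits j N. x \<in> branches (act_tree (task_str b A) (stage j N))"
    using branches_fusion_forcing[OF V] by blast
  obtain k where k: "from_nat_into Ffam k = f" using from_nat_into_surj[OF countable_Ffam f(1)] by blast
  obtain l where l: "from_nat_into P l = T0" using from_nat_into_surj[OF countable_P T0] by blast
  define n where "n = Suc (k + l + a + b + i + j)"
  obtain A where A: "A \<subseteq> splits i (Suc n)" "x \<in> branches (act_tree (task_str a A) (stage i (Suc n)))"
    using branch_U[OF x(1)] by blast
  obtain B where B: "B \<subseteq> splits j (Suc n)" "f x \<in> branches (act_tree (task_str b B) (stage j (Suc n)))"
    using branch_V[OF x(2)] by blast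
  have "Separate k l a b i j A B \<in> set (tasks n (snd (stages (Suc n))))"
    using A(1) B(1) by (intro Separate_mem_tasks) (simp_all add: n_def splits_def)
  then have "achieved (Separate k l a b i j A B) (\<lambda>i. stage i (Suc n))" by (rule achieved_at_stage)
  moreover have "x \<in> branches T0" using x(1) U(2) branches_mono by blast
  ultimately show False using A(2) B(2) f(2,3) k l by (auto simp: Let_def)
qed

end

theorem theorem8p3:
  fixes P :: "bool list set set"
    and Dfam :: "bool list set set set"
    and Ffam :: "((nat \<Rightarrow> bool) \<Rightarrow> (nat \<Rightarrow> bool)) set"
  assumes "silver_forcing P"
    and "countable P"
    and "countable Dfam"
    and "countable Ffam"
  shows "\<exists>Q. countable Q \<and> silver_forcing Q \<and> sqsub Dfam Ffam P Q"
proof (cases "P = {}")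
  case True
  then have "sqsub Dfam Ffam P {}" by (simp add: sqsub_def)
  moreover have "silver_forcing {}" by (simp add: silver_forcing_def)
  ultimately show ?thesis by blast
next
  case False
  interpret silver_fusion P Dfam Ffam using assms False by unfold_locales
  have "sqsub Dfam Ffam P fusion_forcing"
    unfolding sqsub_def
    by (intro conjI ballI impI allI fusion_forcing_dense fusion_forcing_covers fusion_forcing_separates)
  then show ?thesis using countable_fusion_forcing silver_forcing_fusion_forcing by blast
qed

end
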